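(* Let $(\mathcal{S}_1,\mathcal{S}_2)$ be an $S$-pair with $|S| = n \ge 3$. Then there is at most one element $s \in S$ with the following property: there exist a subset $D \subseteq S - s$ with $|D| = n-2$ and positive integers $i,j$ with $i+j = n-1$ such that $X \cup \{s\} \in \mathcal{S}_1$ for every $i$-element subset $X$ of $D$, and every $j$-element subset of $D$ lies in $\mathcal{S}_2$.
   Context: Let $S$ be a finite nonempty set and $\mathcal{S}_1, \mathcal{S}_2 \subseteq 2^S$. The pair $(\mathcal{S}_1,\mathcal{S}_2)$ is an $S$-pair if: (S1) for $i=1,2$, if $A,B \in \mathcal{S}_i$ with $B \subset A$ and $|A| = |B|+1$, then every $|B|$-element subset of $A$ lies in $\mathcal{S}_i$; (S2) for $i=1,2$, if $A,B \in \mathcal{S}_i$ with $|A|=|B|$ and $|A\cap B| = |A|-1$, then $A\cup B \in \mathcal{S}_i$; (S3) for $i=1,2$, not every singleton $\{s\}$, $s\in S$, lies in $\mathcal{S}_i$, and $S \notin \mathcal{S}_i$; (S4) for $k = 1,\dots,|S|-1$ and $x\in S$, if every $k$-element subset of $S - x$ lies in $\mathcal{S}_1$, then not every $(|S|-k)$-element subset of $S-x$ lies in $\mathcal{S}_2$. *)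

theory Defs
  imports Main
begin

text \<open>A single family satisfying (S1)-(S3).\<close>
definition S_family :: "'a set \<Rightarrow> 'a set set \<Rightarrow> bool" where
  "S_family S F \<longleftrightarrow>
     F \<subseteq> Pow S \<and>
     (\<forall>A\<in>F. \<forall>B\<in>F. B \<subset> A \<and> card A = card B + 1 \<longrightarrow>
        (\<forall>C. C \<subseteq> A \<and> card C = card B \<longrightarrow> C \<in> F)) \<and>
     (\<forall>A\<in>F. \<forall>B\<in>F. card A = card B \<and> card (A \<inter> B) = card A - 1 \<longrightarrow> A \<union> B \<in> F) \<and>
     \<not> (\<forall>s\<in>S. {s} \<in> F) \<and> S \<notin> F"

definition S_pair :: "'a set \<Rightarrow> 'a set set \<Rightarrow> 'a set set \<Rightarrow> bool" where
  "S_pair S F1 F2 \<longleftrightarrow>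
     finite S \<and> S \<noteq> {} \<and> S_family S F1 \<and> S_family S F2 \<and>
     (\<forall>k\<in>{1..card S - 1}. \<forall>x\<in>S.
        (\<forall>X. X \<subseteq> S - {x} \<and> card X = k \<longrightarrow> X \<in> F1) \<longrightarrow>
        \<not> (\<forall>X. X \<subseteq> S - {x} \<and> card X = card S - k \<longrightarrow> X \<in> F2))"

end

theory Submission
  imports Defs
begin

text \<open>
  If \<open>s\<close> has the property, then \<open>D = S - {s, a}\<close> for some \<open>a\<close>, and (S2) makes the
  families upward closed, so \<open>S - {a} \<in> F1\<close>. Two such sets \<open>S - {a}\<close>, \<open>S - {b}\<close> with
  \<open>a \<noteq> b\<close> would give \<open>S \<in> F1\<close> by (S2), so \<open>a\<close> is shared by all elements with the
  property. If \<open>s \<noteq> t\<close> both have it, with exponents \<open>(i, j)\<close> and \<open>(i', j')\<close> where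
  \<open>j' \<le> j\<close>, then (S1) and (S2) put all \<open>(i+1)\<close>-subsets of \<open>S - {a}\<close> into \<open>F1\<close> and all
  its \<open>j\<close>-subsets into \<open>F2\<close>; as \<open>j = n - (i+1)\<close>, this contradicts (S4).
\<close>

lemma S_family_join:
  assumes F: "S_family S F" and A: "finite A" "x \<in> A" "y \<in> A" "x \<noteq> y"
    and Ax: "A - {x} \<in> F" and Ay: "A - {y} \<in> F"
  shows "A \<in> F"
proof -
  have "card (A - {x}) = card (A - {y})" using A by simp
  moreover have "(A - {x}) \<inter> (A - {y}) = A - {x} - {y}" by blast
  then have "card ((A - {x}) \<inter> (A - {y})) = card (A - {x}) - 1" using A by simp
  moreover have "(A - {x}) \<union> (A - {y}) = A" using A by blast
  moreover have S2: "\<forall>A\<in>F. \<forall>B\<in>F. card A = card B \<and> card (A \<inter> B) = card A - 1 \<longrightarrow> A \<union> B \<in> F"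
    using F unfolding S_family_def by blast
  ultimately show ?thesis using S2[rule_format, OF Ax Ay] by simp
qed

lemma S_family_exchange:
  assumes F: "S_family S F" and A: "finite A" "x \<in> A" "y \<in> A"
    and "A \<in> F" and "A - {x} \<in> F"
  shows "A - {y} \<in> F"
proof -
  have S1: "\<forall>A\<in>F. \<forall>B\<in>F. B \<subset> A \<and> card A = card B + 1 \<longrightarrow>
      (\<forall>C. C \<subseteq> A \<and> card C = card B \<longrightarrow> C \<in> F)"
    using F unfolding S_family_def by blast
  show ?thesis
    by (rule S1[rule_format, OF assms(5,6)]) (use A card_Suc_Diff1[of A x] in auto)
qed

lemma S_family_upward_closed:
  assumes F: "S_family S F" and "finite D" "finite E" "E \<inter> D = {}" "0 < j"
    and base: "\<And>X. X \<subseteq> D \<Longrightarrow> card X = j \<Longrightarrow> E \<union> X \<in> F"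
    and X: "X \<subseteq> D" "j \<le> card X"
  shows "E \<union> X \<in> F"
proof -
  have "E \<union> X \<in> F" if "X \<subseteq> D" "card X = j + d" for X d
    using that
  proof (induction d arbitrary: X)
    case 0
    then show ?case using base by simp
  next
    case (Suc d)
    have fin: "finite X" using Suc.prems \<open>finite D\<close> finite_subset by blast
    then obtain x where x: "x \<in> X" using Suc.prems by fastforce
    then have "card (X - {x}) = j + d" using Suc.prems fin by simp
    then have "X - {x} \<noteq> {}" using \<open>0 < j\<close> by (metis add_gr_0 card.empty less_irrefl)
    then obtain y where y: "y \<in> X" "y \<noteq> x" by blast
    have "E \<union> (X - {z}) \<in> F" if "z \<in> X" for z
      using Suc.IH[of "X - {z}"] Suc.prems that fin by auto
    moreover have "E \<union> (X - {z}) = E \<union> X - {z}" if "z \<in> X" for z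
      using that Suc.prems assms(4) by blast
    ultimately show ?case
      using S_family_join[OF F _ _ _ y(2)] x y fin \<open>finite E\<close> by simp
  qed
  then show ?thesis using X le_Suc_ex by blast
qed

lemma subset_card_minus_two_obtain:
  assumes "finite S" "s \<in> S" "D \<subseteq> S - {s}" "card D = card S - 2" "2 \<le> card S"
  obtains a where "a \<in> S" "a \<noteq> s" "D = S - {s, a}"
proof -
  have "card (S - {s} - D) = 1"
    using assms by (simp add: card_Diff_subset finite_subset)
  then obtain a where "S - {s} - D = {a}" using card_1_singletonE by blast
  then show ?thesis using that assms(3) by blast
qed

definition S_witness :: "'a set \<Rightarrow> 'a set set \<Rightarrow> 'a set set \<Rightarrow> 'a \<Rightarrow> 'a \<Rightarrow> nat \<Rightarrow> nat \<Rightarrow> bool" where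
  "S_witness S F1 F2 s a i j \<longleftrightarrow>
     s \<in> S \<and> a \<in> S \<and> a \<noteq> s \<and> 0 < i \<and> 0 < j \<and> i + j = card S - 1 \<and>
     (\<forall>X. X \<subseteq> S - {s, a} \<and> card X = i \<longrightarrow> insert s X \<in> F1) \<and>
     (\<forall>X. X \<subseteq> S - {s, a} \<and> card X = j \<longrightarrow> X \<in> F2)"

lemma S_witnessD:
  assumes "S_witness S F1 F2 s a i j"
  shows "s \<in> S" "a \<in> S" "a \<noteq> s" "0 < i" "0 < j" "i + j = card S - 1"
    "\<And>X. X \<subseteq> S - {s, a} \<Longrightarrow> card X = i \<Longrightarrow> insert s X \<in> F1"
    "\<And>X. X \<subseteq> S - {s, a} \<Longrightarrow> card X = j \<Longrightarrow> X \<in> F2"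
  using assms unfolding S_witness_def by blast+

lemma S_witness_coatom:
  assumes SP: "S_pair S F1 F2" and W: "S_witness S F1 F2 s a i j"
  shows "S - {a} \<in> F1"
proof -
  have fin: "finite S" and F1: "S_family S F1" using SP unfolding S_pair_def by simp_all
  note W = S_witnessD[OF W]
  have "card (S - {s, a}) = card S - 2" using W fin by (simp add: card_Diff_subset)
  then have "i \<le> card (S - {s, a})" using W(5,6) by linarith
  then have "{s} \<union> (S - {s, a}) \<in> F1"
    using S_family_upward_closed[OF F1, of "S - {s, a}" "{s}" i] fin W(4,7) by simp
  moreover have "{s} \<union> (S - {s, a}) = S - {a}" using W by blast
  ultimately show ?thesis by simp
qed

lemma S_family_coatom_unique:
  assumes F: "S_family S F" and "finite S" "a \<in> S" "b \<in> S"
    and "S - {a} \<in> F" "S - {b} \<in> F"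
  shows "a = b"
proof -
  have "S \<notin> F" using F unfolding S_family_def by blast
  then show ?thesis using S_family_join[OF F, of S a b] assms(2-) by blast
qed

text \<open>Case \<open>s \<notin> Y\<close>: \<open>Y \<union> {s}\<close> and \<open>Y \<union> {s} - {y}\<close> lie in \<open>F\<close>, so (S1) gives \<open>Y\<close>.\<close>
lemma S_family_cone_lift:
  assumes F: "S_family S F" and T: "finite T" "s \<in> T" and "0 < i"
    and cone: "\<And>X. X \<subseteq> T - {s} \<Longrightarrow> card X = i \<Longrightarrow> insert s X \<in> F"
    and Y: "Y \<subseteq> T" "card Y = i + 1"
  shows "Y \<in> F"
proof (cases "s \<in> Y")
  case True
  then have "insert s (Y - {s}) \<in> F"
    using cone[of "Y - {s}"] Y T finite_subset by fastforce
  then show ?thesis using True by (simp add: insert_absorb)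
next
  case False
  have fin: "finite (insert s Y)" using Y T finite_subset by blast
  obtain y where y: "y \<in> Y" using Y by fastforce
  have "{s} \<union> Y \<in> F"
    by (rule S_family_upward_closed[OF F _ _ _ \<open>0 < i\<close>, of "T - {s}"])
      (use cone False Y T in auto)
  moreover have "insert s Y - {y} \<in> F"
    using cone[of "Y - {y}"] False Y y fin by (auto simp: insert_Diff_if)
  ultimately have "insert s Y - {s} \<in> F"
    using S_family_exchange[OF F fin, of y s] y by simp
  then show ?thesis using False by simp
qed

text \<open>Case \<open>s, t \<in> Z\<close>: add a point \<open>w \<notin> Z\<close>, join over \<open>s\<close> and \<open>t\<close>, then drop \<open>w\<close>.\<close>
lemma S_family_two_boxes_lift:
  assumes F: "S_family S F" and T: "finite T" "s \<in> T" "t \<in> T" "s \<noteq> t"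
    and "0 < j'" "j' \<le> j" "j < card T"
    and box_s: "\<And>X. X \<subseteq> T - {s} \<Longrightarrow> card X = j \<Longrightarrow> X \<in> F"
    and box_t: "\<And>X. X \<subseteq> T - {t} \<Longrightarrow> card X = j' \<Longrightarrow> X \<in> F"
    and Z: "Z \<subseteq> T" "card Z = j"
  shows "Z \<in> F"
proof -
  have up_t: "X \<in> F" if "X \<subseteq> T - {t}" "j' \<le> card X" for X
    using S_family_upward_closed[OF F _ _ _ \<open>0 < j'\<close>, of "T - {t}" "{}"] box_t that T by auto
  consider "s \<notin> Z" | "t \<notin> Z" | "s \<in> Z" "t \<in> Z" by blast
  then show ?thesis
  proof cases
    case 1
    then show ?thesis using box_s Z by blast
  next
    case 2
    then show ?thesis using up_t Z \<open>j' \<le> j\<close> by blast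
  next
    case 3
    have "Z \<noteq> T" using Z \<open>j < card T\<close> by auto
    then obtain w where w: "w \<in> T" "w \<notin> Z" using Z by blast
    define A where "A = insert w Z"
    have fin: "finite A" and cA: "card A = j + 1"
      using Z T w by (auto simp: A_def finite_subset)
    have As: "A - {s} \<in> F" using box_s[of "A - {s}"] 3 w Z fin cA by (auto simp: A_def)
    have "A - {t} \<in> F" using up_t[of "A - {t}"] 3 w Z fin cA \<open>j' \<le> j\<close> by (auto simp: A_def)
    then have "A \<in> F" using S_family_join[OF F fin _ _ T(4) As] 3 by (simp add: A_def)
    then have "A - {w} \<in> F" using S_family_exchange[OF F fin, of s w] As 3 by (simp add: A_def)
    then show ?thesis using w by (simp add: A_def)
  qed
qed

lemma S_pair_complementary_boxes:
  assumes "S_pair S F1 F2" "x \<in> S" "0 < k" "k < card S"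
    and "\<And>X. X \<subseteq> S - {x} \<Longrightarrow> card X = k \<Longrightarrow> X \<in> F1"
  obtains X where "X \<subseteq> S - {x}" "card X = card S - k" "X \<notin> F2"
proof -
  have S4: "\<forall>k\<in>{1..card S - 1}. \<forall>x\<in>S.
      (\<forall>X. X \<subseteq> S - {x} \<and> card X = k \<longrightarrow> X \<in> F1) \<longrightarrow>
      \<not> (\<forall>X. X \<subseteq> S - {x} \<and> card X = card S - k \<longrightarrow> X \<in> F2)"
    using assms(1) unfolding S_pair_def by blast
  have "k \<in> {1..card S - 1}" using assms(3,4) by simp
  from S4[rule_format, OF this \<open>x \<in> S\<close>] assms(5) that show ?thesis by blast
qed

lemma S_witness_conflict:
  assumes SP: "S_pair S F1 F2" and "s \<noteq> t" "j' \<le> j"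
    and Ws: "S_witness S F1 F2 s a i j" and Wt: "S_witness S F1 F2 t a i' j'"
  shows False
proof -
  have fin: "finite S" and F1: "S_family S F1" and F2: "S_family S F2"
    using SP unfolding S_pair_def by simp_all
  have swap: "S - {x, a} = S - {a} - {x}" for x by blast
  note s = S_witnessD[OF Ws, unfolded swap] and t = S_witnessD[OF Wt, unfolded swap]
  have T: "finite (S - {a})" "s \<in> S - {a}" "t \<in> S - {a}" "card (S - {a}) = i + j"
    using s(1-6) t(1-3) fin by auto
  have cone: "Y \<in> F1" if "Y \<subseteq> S - {a}" "card Y = i + 1" for Y
    by (rule S_family_cone_lift[OF F1 T(1,2) \<open>0 < i\<close> s(7) that])
  have k: "0 < i + 1" "i + 1 < card S" using s(5,6) by linarith+
  obtain Z where Z: "Z \<subseteq> S - {a}" "card Z = card S - (i + 1)" "Z \<notin> F2"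
    by (rule S_pair_complementary_boxes[OF SP \<open>a \<in> S\<close> k cone])
  have "card Z = j" "j < card (S - {a})" using Z(2) s(4,6) T(4) by linarith+
  then have "Z \<in> F2"
    using S_family_two_boxes_lift[OF F2 T(1-3) \<open>s \<noteq> t\<close> t(5) \<open>j' \<le> j\<close> _ s(8) t(8) Z(1)] by blast
  with Z(3) show False by contradiction
qed

theorem mainTheorem9:
  fixes S :: "'a set" and F1 F2 :: "'a set set" and P :: "'a \<Rightarrow> bool"
  assumes "S_pair S F1 F2" and "card S \<ge> 3"
  defines "P \<equiv> (\<lambda>s. s \<in> S \<and>
           (\<exists>D i j. D \<subseteq> S - {s} \<and> card D = card S - 2 \<and> i > 0 \<and> j > 0 \<and>
              i + j = card S - 1 \<and>
              (\<forall>X. X \<subseteq> D \<and> card X = i \<longrightarrow> insert s X \<in> F1) \<and>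
              (\<forall>X. X \<subseteq> D \<and> card X = j \<longrightarrow> X \<in> F2)))"
  shows "\<forall>s t. P s \<and> P t \<longrightarrow> s = t"
proof (intro allI impI)
  fix s t assume "P s \<and> P t"
  have fin: "finite S" and F1: "S_family S F1" using assms(1) unfolding S_pair_def by simp_all
  have witness: "\<exists>a i j. S_witness S F1 F2 x a i j" if "P x" for x
  proof -
    obtain D i j where x: "x \<in> S" "D \<subseteq> S - {x}" "card D = card S - 2" and rest:
      "0 < i" "0 < j" "i + j = card S - 1"
      "\<forall>X. X \<subseteq> D \<and> card X = i \<longrightarrow> insert x X \<in> F1" "\<forall>X. X \<subseteq> D \<and> card X = j \<longrightarrow> X \<in> F2"
      using \<open>P x\<close> unfolding P_def by (elim conjE exE) blast
    obtain a where "a \<in> S" "a \<noteq> x" "D = S - {x, a}"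
      using subset_card_minus_two_obtain[OF fin x] assms(2) by auto
    with x(1) rest have "S_witness S F1 F2 x a i j" unfolding S_witness_def by simp
    then show ?thesis by blast
  qed
  obtain a i j b i' j' where Ws: "S_witness S F1 F2 s a i j" and Wt: "S_witness S F1 F2 t b i' j'"
    using witness \<open>P s \<and> P t\<close> by blast
  have "a = b"
    using S_family_coatom_unique[OF F1 fin S_witnessD(2)[OF Ws] S_witnessD(2)[OF Wt]]
      S_witness_coatom[OF assms(1) Ws] S_witness_coatom[OF assms(1) Wt] .
  show "s = t"
  proof (rule ccontr)
    assume "s \<noteq> t"
    show False
    proof (cases "j' \<le> j")
      case True
      with Wt show False using S_witness_conflict[OF assms(1) \<open>s \<noteq> t\<close> _ Ws] \<open>a = b\<close> by simp
    next
      case False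
      with Ws show False
        using S_witness_conflict[OF assms(1) \<open>s \<noteq> t\<close>[symmetric], of j j' b i'] Wt \<open>a = b\<close> by simp
    qed
  qed
qed

end
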